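(* For all $y\in\{0,1\}^n$ with $y\ne0^n$ and all integers $r\ge0$, on the $\ell$-boson subspace, $$\|\tilde G_y\cdot\mathsf{Con}_r\|_{\mathrm{op}}\le\sqrt r+\sqrt{2+4r},\qquad\|\tilde H_y\cdot\mathsf{Con}_r\|_{\mathrm{op}}\le9r+9.$$
   Context: Bosonic setting with $2^n$ modes indexed by $\{0,1\}^n$: position operators $\hat a_x,\hat a_x^\dagger$ (standard bosonic commutation relations), vacuum $|\mathrm{vac}\rangle$, momentum operators $\tilde a_y=2^{-n/2}\sum_x(-1)^{x\cdot y}\hat a_x$ and $\tilde a_y^\dagger$ likewise, momentum Fock states $|u\rangle=\prod_y(\tilde a_y^\dagger)^{u_y}(u_y!)^{-1/2}|\mathrm{vac}\rangle$. We work in the subspace of exactly $\ell$ bosons. $\tilde G_y=\frac1{\sqrt\ell}\sum_x\tilde a^\dagger_{x\oplus y}\tilde a_x$ and $\tilde H_y=\frac1\ell\sum_{x,x'}\tilde a^\dagger_{x\oplus y}\tilde a^\dagger_{x'\oplus y}\tilde a_x\tilde a_{x'}$. $\mathsf{Con}_r$ is the projector onto the span of momentum Fock states $|u\rangle$ with $\sum_yu_y=\ell$ and $u_{0^n}\ge\ell-r$ ($r$-condensates). *)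

theory Defs
  imports Complex_Main
begin

text \<open>Modes are indexed by \<open>{0,1}^n\<close>, encoded as naturals \<open>x < 2^n\<close> (binary digits);
  \<open>x \<oplus> y\<close> is bitwise xor and \<open>0^n\<close> is \<open>0\<close>.  Since all operators in the statement
  are built from momentum operators, we work in the (orthonormal) momentum Fock basis:
  a state is a coefficient function on momentum occupation vectors \<open>u :: nat \<Rightarrow> nat\<close>.\<close>

definition modes :: "nat \<Rightarrow> nat set" where
  "modes n = {..<2^n}"

definition configs :: "nat \<Rightarrow> nat \<Rightarrow> (nat \<Rightarrow> nat) set" where
  "configs n l = {u. (\<forall>x. x \<notin> modes n \<longrightarrow> u x = 0) \<and> (\<Sum>x\<in>modes n. u x) = l}"

type_synonym state = "(nat \<Rightarrow> nat) \<Rightarrow> complex"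
type_synonym op = "state \<Rightarrow> state"

text \<open>Momentum annihilation: \<open>a_x |u\<rangle> = sqrt(u_x) |u - e_x\<rangle>\<close>.\<close>
definition ann :: "nat \<Rightarrow> op" where
  "ann x \<psi> = (\<lambda>v. complex_of_real (sqrt (real (v x + 1))) * \<psi> (v(x := v x + 1)))"

text \<open>Momentum creation: \<open>a_x^\<dagger> |u\<rangle> = sqrt(u_x+1) |u + e_x\<rangle>\<close>.\<close>
definition cre :: "nat \<Rightarrow> op" where
  "cre x \<psi> = (\<lambda>v. if 0 < v x then complex_of_real (sqrt (real (v x))) * \<psi> (v(x := v x - 1)) else 0)"

definition Gt :: "nat \<Rightarrow> nat \<Rightarrow> nat \<Rightarrow> op" where
  "Gt n l y \<psi> = (\<lambda>v. complex_of_real (1 / sqrt (real l)) *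
      (\<Sum>x\<in>modes n. cre (xor x y) (ann x \<psi>) v))"

definition Ht :: "nat \<Rightarrow> nat \<Rightarrow> nat \<Rightarrow> op" where
  "Ht n l y \<psi> = (\<lambda>v. complex_of_real (1 / real l) *
      (\<Sum>x\<in>modes n. \<Sum>x'\<in>modes n.
          cre (xor x y) (cre (xor x' y) (ann x (ann x' \<psi>))) v))"

definition Con :: "nat \<Rightarrow> nat \<Rightarrow> nat \<Rightarrow> op" where
  "Con n l r \<psi> = (\<lambda>u. if u \<in> configs n l \<and> l - r \<le> u 0 then \<psi> u else 0)"

definition snorm :: "nat \<Rightarrow> nat \<Rightarrow> state \<Rightarrow> real" where
  "snorm n l \<psi> = sqrt (\<Sum>u\<in>configs n l. (cmod (\<psi> u))\<^sup>2)"

definition in_sector :: "nat \<Rightarrow> nat \<Rightarrow> state \<Rightarrow> bool" where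
  "in_sector n l \<psi> \<longleftrightarrow> (\<forall>u. u \<notin> configs n l \<longrightarrow> \<psi> u = 0)"

definition opnorm :: "nat \<Rightarrow> nat \<Rightarrow> op \<Rightarrow> real" where
  "opnorm n l A = Sup {snorm n l (A \<psi>) | \<psi>. in_sector n l \<psi> \<and> snorm n l \<psi> \<le> 1}"

end

theory Submission
  imports Defs "HOL-Analysis.Analysis"
begin

text \<open>In the momentum Fock basis every term of \<open>G\<^sub>y\<close> moves one boson from mode \<open>x\<close> to mode
  \<open>x xor y\<close>, so \<open>G\<^sub>y\<close> has a nonnegative kernel and the Schur test bounds its norm on
  \<open>r\<close>-condensates by the largest row and column sum.  Only the two hops touching the condensate
  mode \<open>0\<close> carry a factor of order \<open>sqrt l\<close>, and they come with \<open>sqrt u\<^sub>y\<close> or \<open>sqrt (u\<^sub>y + 1)\<close>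
  where \<open>u\<^sub>y \<le> r\<close>; the other hops pair up under \<open>x \<mapsto> x xor y\<close> and together contribute at
  most \<open>sqrt 2\<close> times the number of non-condensed bosons.
  The commutation relations give \<open>H\<^sub>y = G\<^sub>y\<^sup>2 - 1\<close> on the \<open>l\<close>-boson sector, and \<open>G\<^sub>y\<close> maps
  \<open>r\<close>-condensates into \<open>(r + 1)\<close>-condensates, so the bound for \<open>H\<^sub>y\<close> is the product of the
  bounds for \<open>r + 1\<close> and \<open>r\<close>, plus one.\<close>

lemma xor_cancel_right [simp]: "xor (xor x y) y = (x::nat)"
  by (simp add: xor.assoc)

lemma xor_eq_self_iff [simp]: "xor x y = x \<longleftrightarrow> (y::nat) = 0"
proof
  assume "xor x y = x"
  then have "xor x (xor x y) = xor x x"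
    by simp
  then show "y = 0"
    by (simp add: xor.assoc[symmetric])
qed simp

lemma xor_eq_left_self_iff [simp]: "xor x y = y \<longleftrightarrow> (x::nat) = 0"
  using xor_eq_self_iff[of y x] by (simp add: xor.commute)

lemma xor_eq_zero_iff [simp]: "xor x y = 0 \<longleftrightarrow> x = (y::nat)"
proof
  assume "xor x y = 0"
  then have "xor (xor x y) y = y"
    by simp
  then show "x = y"
    by simp
qed simp

lemma zero_in_modes [simp]: "0 \<in> modes n"
  by (simp add: modes_def)

lemma finite_modes [simp]: "finite (modes n)"
  by (simp add: modes_def)

lemma xor_in_modes: "x \<in> modes n \<Longrightarrow> y \<in> modes n \<Longrightarrow> xor x y \<in> modes n"
  unfolding modes_def lessThan_iff by (metis take_bit_nat_eq_self_iff take_bit_xor)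

lemma sum_split_two:
  assumes "finite A" "a \<in> A" "b \<in> A" "a \<noteq> b"
  shows "sum g A = g a + g b + sum g (A - {a, b})"
proof -
  have "sum g A = sum g (A - {a, b}) + sum g {a, b}"
    using assms by (intro sum.subset_diff) auto
  then show ?thesis
    using assms by (simp add: add.commute)
qed

lemma configs_apply_le: "u \<in> configs n l \<Longrightarrow> x \<in> modes n \<Longrightarrow> u x \<le> l"
  unfolding configs_def using member_le_sum[of x "modes n" u] by simp

lemma finite_configs: "finite (configs n l)"
proof (rule finite_subset)
  show "configs n l \<subseteq> {u. \<forall>x. (x \<in> modes n \<longrightarrow> u x \<in> {..l}) \<and> (x \<notin> modes n \<longrightarrow> u x = 0)}"
    using configs_apply_le unfolding configs_def by blast
  show "finite {u. \<forall>x. (x \<in> modes n \<longrightarrow> u x \<in> {..l}) \<and> (x \<notin> modes n \<longrightarrow> u x = 0)}"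
    by (rule finite_set_of_finite_funs) simp_all
qed

section \<open>Norms and the Schur test\<close>

lemma snorm_eq_L2_set: "snorm n l \<psi> = L2_set (\<lambda>u. cmod (\<psi> u)) (configs n l)"
  by (simp add: snorm_def L2_set_def)

lemma snorm_nonneg: "0 \<le> snorm n l \<psi>"
  by (simp add: snorm_def sum_nonneg)

lemma snorm_diff_le: "snorm n l (\<lambda>v. f v - g v) \<le> snorm n l f + snorm n l g"
proof -
  have "snorm n l (\<lambda>v. f v - g v) \<le> L2_set (\<lambda>u. cmod (f u) + cmod (g u)) (configs n l)"
    unfolding snorm_eq_L2_set by (rule L2_set_mono) (simp_all add: norm_triangle_ineq4)
  also have "\<dots> \<le> snorm n l f + snorm n l g"
    unfolding snorm_eq_L2_set by (rule L2_set_triangle_ineq)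
  finally show ?thesis .
qed

lemma snorm_mono:
  "(\<And>u. u \<in> configs n l \<Longrightarrow> cmod (f u) \<le> cmod (g u)) \<Longrightarrow> snorm n l f \<le> snorm n l g"
  unfolding snorm_eq_L2_set by (rule L2_set_mono) auto

lemma opnorm_le:
  assumes "\<And>\<psi>. in_sector n l \<psi> \<Longrightarrow> snorm n l \<psi> \<le> 1 \<Longrightarrow> snorm n l (A \<psi>) \<le> B"
  shows "opnorm n l A \<le> B"
  unfolding opnorm_def
proof (rule cSup_least)
  have "in_sector n l (\<lambda>_. 0) \<and> snorm n l (\<lambda>_. 0) \<le> 1"
    by (simp add: in_sector_def snorm_def)
  then show "{snorm n l (A \<psi>) |\<psi>. in_sector n l \<psi> \<and> snorm n l \<psi> \<le> 1} \<noteq> {}"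
    by blast
next
  fix x assume "x \<in> {snorm n l (A \<psi>) |\<psi>. in_sector n l \<psi> \<and> snorm n l \<psi> \<le> 1}"
  then show "x \<le> B"
    using assms by blast
qed

lemma weighted_Cauchy_Schwarz:
  fixes m a :: "'a \<Rightarrow> real"
  assumes "\<And>i. i \<in> I \<Longrightarrow> 0 \<le> m i"
  shows "(\<Sum>i\<in>I. m i * a i)\<^sup>2 \<le> (\<Sum>i\<in>I. m i) * (\<Sum>i\<in>I. m i * (a i)\<^sup>2)"
proof -
  have "(\<Sum>i\<in>I. m i * a i) = (\<Sum>i\<in>I. sqrt (m i) * (sqrt (m i) * a i))"
    by (rule sum.cong) (use assms in \<open>auto simp: real_sqrt_mult_self mult.assoc[symmetric]\<close>)
  moreover have "(\<Sum>i\<in>I. m i) = (\<Sum>i\<in>I. (sqrt (m i))\<^sup>2)"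
    by (rule sum.cong) (use assms in auto)
  moreover have "(\<Sum>i\<in>I. m i * (a i)\<^sup>2) = (\<Sum>i\<in>I. (sqrt (m i) * a i)\<^sup>2)"
    by (rule sum.cong) (use assms in \<open>auto simp: power_mult_distrib\<close>)
  ultimately show ?thesis
    using Cauchy_Schwarz_ineq_sum by metis
qed

lemma schur_test:
  fixes M :: "'a \<Rightarrow> 'b \<Rightarrow> real" and \<phi> :: "'b \<Rightarrow> complex"
  assumes "finite V" "finite S" "\<And>v u. 0 \<le> M v u" "0 \<le> K\<^sub>1"
    and row: "\<And>v. v \<in> V \<Longrightarrow> (\<Sum>u\<in>S. M v u) \<le> K\<^sub>1"
    and col: "\<And>u. u \<in> S \<Longrightarrow> (\<Sum>v\<in>V. M v u) \<le> K\<^sub>2"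
  shows "(\<Sum>v\<in>V. (cmod (\<Sum>u\<in>S. of_real (M v u) * \<phi> u))\<^sup>2)
    \<le> K\<^sub>1 * K\<^sub>2 * (\<Sum>u\<in>S. (cmod (\<phi> u))\<^sup>2)"
proof -
  have "(cmod (\<Sum>u\<in>S. of_real (M v u) * \<phi> u))\<^sup>2 \<le> K\<^sub>1 * (\<Sum>u\<in>S. M v u * (cmod (\<phi> u))\<^sup>2)"
    if v: "v \<in> V" for v
  proof -
    have "cmod (\<Sum>u\<in>S. of_real (M v u) * \<phi> u) \<le> (\<Sum>u\<in>S. M v u * cmod (\<phi> u))"
      by (rule order_trans[OF norm_sum]) (simp add: norm_mult assms(3))
    then have "(cmod (\<Sum>u\<in>S. of_real (M v u) * \<phi> u))\<^sup>2 \<le> (\<Sum>u\<in>S. M v u * cmod (\<phi> u))\<^sup>2"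
      by (rule power_mono) simp
    also have "\<dots> \<le> (\<Sum>u\<in>S. M v u) * (\<Sum>u\<in>S. M v u * (cmod (\<phi> u))\<^sup>2)"
      by (rule weighted_Cauchy_Schwarz) (use assms in auto)
    also have "\<dots> \<le> K\<^sub>1 * (\<Sum>u\<in>S. M v u * (cmod (\<phi> u))\<^sup>2)"
      by (rule mult_right_mono) (use row v assms(3) in \<open>auto intro: sum_nonneg\<close>)
    finally show ?thesis .
  qed
  then have "(\<Sum>v\<in>V. (cmod (\<Sum>u\<in>S. of_real (M v u) * \<phi> u))\<^sup>2)
      \<le> (\<Sum>v\<in>V. K\<^sub>1 * (\<Sum>u\<in>S. M v u * (cmod (\<phi> u))\<^sup>2))"
    by (rule sum_mono)
  also have "\<dots> = K\<^sub>1 * (\<Sum>u\<in>S. (\<Sum>v\<in>V. M v u) * (cmod (\<phi> u))\<^sup>2)"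
    by (simp add: sum_distrib_left sum_distrib_right sum.swap[of _ V S])
  also have "\<dots> \<le> K\<^sub>1 * (\<Sum>u\<in>S. K\<^sub>2 * (cmod (\<phi> u))\<^sup>2)"
    by (rule mult_left_mono, rule sum_mono, rule mult_right_mono) (use col assms in auto)
  also have "\<dots> = K\<^sub>1 * K\<^sub>2 * (\<Sum>u\<in>S. (cmod (\<phi> u))\<^sup>2)"
    unfolding sum_distrib_left by (simp add: mult.assoc)
  finally show ?thesis .
qed

section \<open>Canonical commutation relations\<close>

lemma cre_sum: "cre z (\<lambda>w. \<Sum>i\<in>I. f i w) v = (\<Sum>i\<in>I. cre z (f i) v)"
  by (simp add: cre_def sum_distrib_left)

lemma cre_add: "cre z (\<lambda>w. f w + g w) v = cre z f v + cre z g v"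
  by (simp add: cre_def distrib_left)

lemma cre_scale: "cre z (\<lambda>w. c * f w) v = c * cre z f v"
  by (simp add: cre_def)

lemma cre_if: "cre z (\<lambda>w. if P then f w else 0) v = (if P then cre z f v else 0)"
  by (simp add: cre_def)

lemma ann_sum: "ann z (\<lambda>w. \<Sum>i\<in>I. f i w) v = (\<Sum>i\<in>I. ann z (f i) v)"
  by (simp add: ann_def sum_distrib_left)

lemma ann_scale: "ann z (\<lambda>w. c * f w) v = c * ann z f v"
  by (simp add: ann_def)

lemma of_real_sqrt_mult_self: "0 \<le> a \<Longrightarrow> of_real (sqrt a) * of_real (sqrt a) = (of_real a :: complex)"
  by (simp flip: of_real_mult)

lemma cre_ann_same: "cre x (ann x \<phi>) v = of_nat (v x) * \<phi> v"
proof (cases "v x = 0")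
  case False
  then have "cre x (ann x \<phi>) v = (of_real (sqrt (v x)) * of_real (sqrt (v x))) * \<phi> v"
    by (simp add: ann_def cre_def)
  then show ?thesis
    by (simp add: of_real_sqrt_mult_self)
qed (simp add: cre_def)

lemma ann_cre_same: "ann x (cre x \<phi>) w = of_nat (w x + 1) * \<phi> w"
proof -
  have "ann x (cre x \<phi>) w = (of_real (sqrt (w x + 1)) * of_real (sqrt (w x + 1))) * \<phi> w"
    by (simp add: ann_def cre_def)
  then show ?thesis
    by (simp add: of_real_sqrt_mult_self)
qed

lemma ann_cre_commute: "ann x (cre z \<phi>) w = cre z (ann x \<phi>) w + (if x = z then \<phi> w else 0)"
proof (cases "x = z")
  case True
  then show ?thesis
    by (simp add: ann_cre_same cre_ann_same algebra_simps)
next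
  case False
  then have "w(x := Suc (w x), z := w z - 1) = w(z := w z - 1, x := Suc (w x))"
    by (rule fun_upd_twist)
  with False show ?thesis
    by (simp add: ann_def cre_def mult.left_commute)
qed

lemma sum_cre_ann_in_sector:
  assumes "in_sector n l \<psi>"
  shows "(\<Sum>x\<in>modes n. cre x (ann x \<psi>) v) = of_nat l * \<psi> v"
proof (cases "v \<in> configs n l")
  case True
  then have "(\<Sum>x\<in>modes n. v x) = l"
    by (simp add: configs_def)
  then show ?thesis
    by (simp add: cre_ann_same flip: sum_distrib_right of_nat_sum)
next
  case False
  then show ?thesis
    using assms by (simp add: cre_ann_same in_sector_def)
qed

lemma Gt_Gt_normal_order:
  assumes y: "y \<in> modes n"
  shows "Gt n l y (Gt n l y \<psi>) v = of_real (1 / real l) *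
      ((\<Sum>x\<in>modes n. \<Sum>x'\<in>modes n. cre (xor x y) (cre (xor x' y) (ann x (ann x' \<psi>))) v)
       + (\<Sum>x\<in>modes n. cre x (ann x \<psi>) v))"
proof -
  define c where "c = complex_of_real (1 / sqrt (real l))"
  have cc: "c * c = of_real (1 / real l)"
    by (simp add: c_def flip: of_real_mult)
  have Gt_c: "Gt n l y \<phi> = (\<lambda>w. c * (\<Sum>x'\<in>modes n. cre (xor x' y) (ann x' \<phi>) w))" for \<phi>
    by (simp add: Gt_def c_def fun_eq_iff)
  have ann_Gt: "ann x (Gt n l y \<psi>) = (\<lambda>w. c * (\<Sum>x'\<in>modes n.
      cre (xor x' y) (ann x (ann x' \<psi>)) w + (if x = xor x' y then ann x' \<psi> w else 0)))" for x
    unfolding Gt_c by (rule ext) (simp only: ann_scale ann_sum ann_cre_commute)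
  have delta: "(\<Sum>x\<in>modes n. \<Sum>x'\<in>modes n. if x = xor x' y then cre (xor x y) (ann x' \<psi>) v else 0)
      = (\<Sum>x\<in>modes n. cre x (ann x \<psi>) v)"
    using xor_in_modes[OF _ y] by (subst sum.swap) (simp add: sum.delta)
  have "Gt n l y (Gt n l y \<psi>) v = c * c *
      (\<Sum>x\<in>modes n. \<Sum>x'\<in>modes n. cre (xor x y) (cre (xor x' y) (ann x (ann x' \<psi>))) v
         + (if x = xor x' y then cre (xor x y) (ann x' \<psi>) v else 0))"
    unfolding Gt_c[of "Gt n l y \<psi>"] ann_Gt
    by (simp only: cre_scale cre_sum cre_add cre_if sum_distrib_left mult.assoc)
  also have "\<dots> = of_real (1 / real l) *
      ((\<Sum>x\<in>modes n. \<Sum>x'\<in>modes n. cre (xor x y) (cre (xor x' y) (ann x (ann x' \<psi>))) v)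
       + (\<Sum>x\<in>modes n. cre x (ann x \<psi>) v))"
    by (simp only: cc sum.distrib delta)
  finally show ?thesis .
qed

lemma Ht_eq_Gt_Gt:
  assumes "y \<in> modes n" "0 < l" "in_sector n l \<psi>"
  shows "Ht n l y \<psi> v = Gt n l y (Gt n l y \<psi>) v - \<psi> v"
  using assms by (simp add: Gt_Gt_normal_order sum_cre_ann_in_sector Ht_def distrib_left)

definition Gbound :: "nat \<Rightarrow> real" where
  "Gbound r = sqrt (real r) + sqrt (2 + 4 * real r)"

lemma Gbound_nonneg: "0 \<le> Gbound r"
  by (simp add: Gbound_def)

lemma sqrt_succ_le_Gbound: "sqrt (real r + 1) \<le> Gbound r"
proof -
  have "sqrt (real r + 1) \<le> sqrt (2 + 4 * real r)"
    by simp
  then show ?thesis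
    by (simp add: Gbound_def add_increasing)
qed

lemma sqrt_mult_le_of_le_square:
  assumes "0 \<le> x" "0 \<le> y" "0 \<le> m" "x * y \<le> m\<^sup>2"
  shows "sqrt x * sqrt y \<le> m"
proof -
  have "sqrt (x * y) \<le> sqrt (m\<^sup>2)"
    using assms(4) by (rule real_sqrt_le_mono)
  with assms(3) show ?thesis
    by (simp add: real_sqrt_mult)
qed

lemma Gbound_succ_mult_le: "Gbound (Suc r) * Gbound r + 1 \<le> 9 * real r + 9"
proof -
  define x where "x = real r"
  have x: "0 \<le> x"
    by (simp add: x_def)
  have "Gbound (Suc r) * Gbound r = sqrt (x + 1) * sqrt x + sqrt (x + 1) * sqrt (4 * x + 2)
      + sqrt (4 * x + 6) * sqrt x + sqrt (4 * x + 6) * sqrt (4 * x + 2)"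
    by (simp add: Gbound_def x_def algebra_simps)
  moreover have "sqrt (x + 1) * sqrt x \<le> x + 1/2"
    and "sqrt (x + 1) * sqrt (4 * x + 2) \<le> 2 * x + 3/2"
    and "sqrt (4 * x + 6) * sqrt x \<le> 2 * x + 3/2"
    and "sqrt (4 * x + 6) * sqrt (4 * x + 2) \<le> 4 * x + 4"
    by (rule sqrt_mult_le_of_le_square; use x in \<open>simp add: power2_eq_square algebra_simps\<close>)+
  ultimately show ?thesis
    unfolding x_def by linarith
qed

lemma sqrt_sum_le_Gbound:
  fixes b k r :: nat
  assumes "b + k \<le> r"
  shows "sqrt (real b + 1) + sqrt (real b) + sqrt (2 * real k) \<le> Gbound r"
proof (cases "r = 0")
  case True
  with assms show ?thesis
    by (simp add: Gbound_def)
next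
  case False
  define p where "p = sqrt (real b + 1) + sqrt (real b)"
  define q where "q = sqrt (2 * real k)"
  have "sqrt (real b + 1) * sqrt (real b) \<le> real b + 1/2"
    by (rule sqrt_mult_le_of_le_square) (auto simp: power2_eq_square algebra_simps)
  then have p2: "p\<^sup>2 \<le> 4 * real b + 2"
    unfolding p_def power2_eq_square by (simp add: algebra_simps)
  have "(p + q)\<^sup>2 \<le> 3/2 * p\<^sup>2 + 3 * q\<^sup>2"
    using sum_squares_ge_zero[of "p - 2 * q" 0] by (simp add: power2_eq_square algebra_simps)
  also have "\<dots> \<le> 6 * real r + 3"
    using p2 assms by (simp add: q_def)
  also have "\<dots> \<le> (Gbound r)\<^sup>2"
  proof -
    have "2 * real r \<le> sqrt (real r * (2 + 4 * real r))"
      by (rule real_le_rsqrt) (simp add: power2_eq_square algebra_simps)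
    then have "2 * real r \<le> sqrt (real r) * sqrt (2 + 4 * real r)"
      by (simp add: real_sqrt_mult)
    moreover have "(Gbound r)\<^sup>2 = 2 + 5 * real r + 2 * (sqrt (real r) * sqrt (2 + 4 * real r))"
      by (simp add: Gbound_def power2_sum)
    ultimately show ?thesis
      using False by simp
  qed
  finally show ?thesis
    unfolding p_def q_def by (rule power2_le_imp_le[OF _ Gbound_nonneg])
qed

lemma sqrt_cross_le:
  fixes a b :: nat
  shows "sqrt (real a * (real b + 1)) + sqrt (real b * (real a + 1)) \<le> sqrt 2 * (real a + real b)"
proof -
  define p where "p = sqrt (real a * (real b + 1))"
  define q where "q = sqrt (real b * (real a + 1))"
  have "(p + q)\<^sup>2 \<le> 2 * (p\<^sup>2 + q\<^sup>2)"
    using sum_squares_ge_zero[of "p - q" 0] by (simp add: power2_eq_square algebra_simps)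
  also have "p\<^sup>2 + q\<^sup>2 = real a * (real b + 1) + real b * (real a + 1)"
    by (simp add: p_def q_def)
  also have "2 * \<dots> \<le> (sqrt 2 * (real a + real b))\<^sup>2"
  proof -
    have "real a \<le> real a * real a" "real b \<le> real b * real b"
      by (cases a; simp) (cases b; simp)
    then show ?thesis
      by (simp add: power2_eq_square algebra_simps)
  qed
  finally show ?thesis
    unfolding p_def q_def by (rule power2_le_imp_le) simp
qed

lemma sum_sqrt_cross_le:
  fixes w :: "nat \<Rightarrow> nat"
  assumes "finite D" and closed: "\<And>x. x \<in> D \<Longrightarrow> xor x y \<in> D"
  shows "(\<Sum>x\<in>D. sqrt (real (w x)) * sqrt (real (w (xor x y)) + 1)) \<le> sqrt 2 * (\<Sum>x\<in>D. real (w x))"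
proof -
  define f where "f x = sqrt (real (w x)) * sqrt (real (w (xor x y)) + 1)" for x
  have reindex: "(\<Sum>x\<in>D. h (xor x y)) = (\<Sum>x\<in>D. h x)" for h :: "nat \<Rightarrow> real"
    by (rule sum.reindex_bij_witness[of D "\<lambda>x. xor x y" "\<lambda>x. xor x y"]) (auto simp: closed)
  have "2 * (\<Sum>x\<in>D. f x) = (\<Sum>x\<in>D. f x + f (xor x y))"
    by (simp add: sum.distrib reindex)
  also have "\<dots> \<le> (\<Sum>x\<in>D. sqrt 2 * (real (w x) + real (w (xor x y))))"
    by (rule sum_mono) (use sqrt_cross_le in \<open>simp add: f_def real_sqrt_mult\<close>)
  also have "\<dots> = 2 * (sqrt 2 * (\<Sum>x\<in>D. real (w x)))"
    by (simp add: sum.distrib reindex[of "\<lambda>x. real (w x)"] flip: sum_distrib_left)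
  finally show ?thesis
    unfolding f_def by simp
qed

lemma hop_weight_estimate:
  fixes a b k l r :: nat
  assumes "a + b + k = l" "b + k \<le> r"
  shows "sqrt (real a) * sqrt (real b + 1) + sqrt (real b) * sqrt (real a + 1) + sqrt 2 * real k
    \<le> sqrt (real l) * Gbound r"
proof -
  have "sqrt (real a) * sqrt (real b + 1) \<le> sqrt (real l) * sqrt (real b + 1)"
    by (rule mult_right_mono) (use assms in auto)
  moreover have "sqrt (real b) * sqrt (real a + 1) \<le> sqrt (real l) * sqrt (real b)"
  proof (cases "b = 0")
    case False
    then have "real a + 1 \<le> real l"
      using assms by simp
    then show ?thesis
      by (simp add: mult.commute mult_left_mono)
  qed simp
  moreover have "sqrt 2 * real k \<le> sqrt (real l) * sqrt (2 * real k)"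
  proof -
    have "sqrt 2 * real k = sqrt (2 * real k) * sqrt (real k)"
      by (simp add: real_sqrt_mult)
    also have "\<dots> \<le> sqrt (2 * real k) * sqrt (real l)"
      by (rule mult_left_mono) (use assms in auto)
    finally show ?thesis
      by (simp add: mult.commute)
  qed
  moreover have "sqrt (real l) * (sqrt (real b + 1) + sqrt (real b) + sqrt (2 * real k))
      \<le> sqrt (real l) * Gbound r"
    by (rule mult_left_mono[OF sqrt_sum_le_Gbound]) (use assms in auto)
  ultimately show ?thesis
    unfolding distrib_left by linarith
qed

section \<open>The hopping kernel of \<open>Gt\<close>\<close>

text \<open>\<open>(a\<^sup>\<dagger>\<^sub>x\<^sub>\<oplus>\<^sub>y a\<^sub>x \<phi>) v\<close> is read off \<open>\<phi>\<close> at \<open>hop y x v\<close>, the configuration that this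
  term maps to \<open>v\<close>, i.e. \<open>v\<close> with one boson moved back from \<open>x xor y\<close> to \<open>x\<close>.\<close>

definition hop :: "nat \<Rightarrow> nat \<Rightarrow> (nat \<Rightarrow> nat) \<Rightarrow> nat \<Rightarrow> nat" where
  "hop y x v = v(xor x y := v (xor x y) - 1, x := v x + 1)"

definition hop_coef :: "nat \<Rightarrow> nat \<Rightarrow> (nat \<Rightarrow> nat) \<Rightarrow> real" where
  "hop_coef y x v = sqrt (real (v (xor x y))) * sqrt (real (v x) + 1)"

definition hop_weight :: "nat \<Rightarrow> nat \<Rightarrow> (nat \<Rightarrow> nat) \<Rightarrow> real" where
  "hop_weight n y u = (\<Sum>x\<in>modes n. sqrt (real (u x)) * sqrt (real (u (xor x y)) + 1))"

definition condensates :: "nat \<Rightarrow> nat \<Rightarrow> nat \<Rightarrow> (nat \<Rightarrow> nat) set" where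
  "condensates n l r = {u \<in> configs n l. l - r \<le> u 0}"

definition Gt_kernel :: "nat \<Rightarrow> nat \<Rightarrow> nat \<Rightarrow> (nat \<Rightarrow> nat) \<Rightarrow> (nat \<Rightarrow> nat) \<Rightarrow> real" where
  "Gt_kernel n l y v u =
    1 / sqrt (real l) * (\<Sum>x\<in>modes n. if hop y x v = u then hop_coef y x v else 0)"

lemma hop_coef_nonneg: "0 \<le> hop_coef y x v"
  by (simp add: hop_coef_def)

lemma hop_apply_zero:
  assumes "y \<noteq> 0"
  shows "hop y x v 0 = (if x = 0 then v 0 + 1 else if x = y then v 0 - 1 else v 0)"
  using assms by (auto simp: hop_def)

lemma cre_ann_eq_hop:
  assumes "y \<noteq> 0"
  shows "cre (xor x y) (ann x \<phi>) v = of_real (hop_coef y x v) * \<phi> (hop y x v)"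
proof -
  have "x \<noteq> xor x y"
    using assms by (metis xor_eq_self_iff)
  then show ?thesis
    by (cases "v (xor x y) = 0") (simp_all add: cre_def ann_def hop_coef_def hop_def add.commute)
qed

lemma Gt_eq_hop_sum:
  assumes "y \<noteq> 0"
  shows "Gt n l y \<phi> v =
    of_real (1 / sqrt (real l)) * (\<Sum>x\<in>modes n. of_real (hop_coef y x v) * \<phi> (hop y x v))"
  using assms by (simp add: Gt_def cre_ann_eq_hop)

lemma Gt_eq_kernel_sum:
  assumes "y \<noteq> 0" "finite S" and vanish: "\<And>u. u \<notin> S \<Longrightarrow> \<phi> u = 0"
  shows "Gt n l y \<phi> v = (\<Sum>u\<in>S. of_real (Gt_kernel n l y v u) * \<phi> u)"
proof -
  have entry: "of_real (Gt_kernel n l y v u) * \<phi> u = of_real (1 / sqrt (real l)) *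
      (\<Sum>x\<in>modes n. if hop y x v = u then of_real (hop_coef y x v) * \<phi> u else 0)" for u
    unfolding Gt_kernel_def of_real_mult of_real_sum mult.assoc sum_distrib_right
    by (intro arg_cong2[where f=times] refl sum.cong) auto
  have "(\<Sum>u\<in>S. of_real (Gt_kernel n l y v u) * \<phi> u) = of_real (1 / sqrt (real l)) *
      (\<Sum>x\<in>modes n. \<Sum>u\<in>S. if hop y x v = u then of_real (hop_coef y x v) * \<phi> u else 0)"
    unfolding entry sum_distrib_left[symmetric] by (subst sum.swap) (rule refl)
  also have "\<dots> = Gt n l y \<phi> v"
  proof -
    have "(\<Sum>u\<in>S. if hop y x v = u then of_real (hop_coef y x v) * \<phi> u else 0)
        = of_real (hop_coef y x v) * \<phi> (hop y x v)" for x
      using assms(2) vanish[of "hop y x v"] by (simp add: sum.delta')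
    then show ?thesis
      using assms(1) by (simp add: Gt_eq_hop_sum)
  qed
  finally show ?thesis ..
qed

lemma finite_condensates: "finite (condensates n l r)"
  by (rule finite_subset[OF _ finite_configs]) (auto simp: condensates_def)

lemma Gt_kernel_nonneg: "0 \<le> Gt_kernel n l y v u"
  unfolding Gt_kernel_def by (intro mult_nonneg_nonneg sum_nonneg) (auto simp: hop_coef_nonneg)

lemma Gt_kernel_row_sum:
  assumes "finite S"
  shows "(\<Sum>u\<in>S. Gt_kernel n l y v u)
    = 1 / sqrt (real l) * (\<Sum>x\<in>modes n. if hop y x v \<in> S then hop_coef y x v else 0)"
  unfolding Gt_kernel_def sum_distrib_left[symmetric]
  by (subst sum.swap) (simp add: assms sum.delta')

lemma sum_hop_coef_into_le:
  assumes "y \<noteq> 0"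
  shows "(\<Sum>v\<in>V. if hop y x v = u then hop_coef y x v else 0)
    \<le> sqrt (real (u x)) * sqrt (real (u (xor x y)) + 1)"
proof (cases "finite V")
  case True
  define z where "z = xor x y"
  have xz: "x \<noteq> z"
    using assms by (metis xor_eq_self_iff z_def)
  define t where "t = u(x := u x - 1, z := u z + 1)"
  have unique: "v = t" if "0 < v z" "hop y x v = u" for v
  proof
    fix w
    from that(2) have "u = v(z := v z - 1, x := v x + 1)"
      by (simp add: hop_def z_def)
    with xz that(1) show "v w = t w"
      by (auto simp: t_def)
  qed
  have "(\<Sum>v\<in>V. if hop y x v = u then hop_coef y x v else 0)
      = (\<Sum>v\<in>V. if v = t \<and> hop y x t = u then hop_coef y x t else 0)"
    by (rule sum.cong) (use unique in \<open>auto simp: hop_coef_def z_def\<close>)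
  also have "\<dots> \<le> (if hop y x t = u then hop_coef y x t else 0)"
    using True by (simp add: sum.delta hop_coef_nonneg)
  also have "\<dots> \<le> sqrt (real (u x)) * sqrt (real (u z) + 1)"
  proof (cases "hop y x t = u")
    case True
    then have "u x = t x + 1"
      by (auto simp: hop_def)
    moreover have "t z = u z + 1"
      using xz by (simp add: t_def)
    ultimately show ?thesis
      using True by (simp add: hop_coef_def z_def[symmetric] ac_simps)
  qed simp
  finally show ?thesis
    by (simp add: z_def)
qed (simp add: mult_nonneg_nonneg)

lemma Gt_kernel_col_sum_le:
  assumes "y \<noteq> 0"
  shows "(\<Sum>v\<in>V. Gt_kernel n l y v u) \<le> 1 / sqrt (real l) * hop_weight n y u"
  unfolding Gt_kernel_def hop_weight_def sum_distrib_left[symmetric]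
  by (subst sum.swap) (intro mult_left_mono sum_mono sum_hop_coef_into_le assms; simp)

lemma sum_hop_coef:
  assumes "y \<in> modes n"
  shows "(\<Sum>x\<in>modes n. hop_coef y x v) = hop_weight n y v"
  unfolding hop_weight_def hop_coef_def
  by (rule sum.reindex_bij_witness[of _ "\<lambda>x. xor x y" "\<lambda>x. xor x y"]) (auto simp: assms xor_in_modes)

lemma xor_in_modes_minus:
  assumes "y \<in> modes n" "x \<in> modes n - {0, y}"
  shows "xor x y \<in> modes n - {0, y}"
  using assms xor_in_modes by auto

lemma configs_sum_split:
  assumes "u \<in> configs n l" "y \<in> modes n" "y \<noteq> 0"
  shows "u 0 + u y + (\<Sum>x\<in>modes n - {0, y}. u x) = l"
  using assms sum_split_two[of "modes n" 0 y u] by (simp add: configs_def)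

lemma hop_weight_condensate_le:
  assumes y: "y \<in> modes n" "y \<noteq> 0" and u: "u \<in> condensates n l r"
  shows "hop_weight n y u \<le> sqrt (real l) * Gbound r"
proof -
  define D where "D = modes n - {0, y}"
  define k where "k = (\<Sum>x\<in>D. u x)"
  have split: "u 0 + u y + k = l"
    using u y configs_sum_split by (simp add: condensates_def k_def D_def)
  moreover have "u y + k \<le> r"
  proof -
    have "l - r \<le> u 0"
      using u by (simp add: condensates_def)
    with split show ?thesis
      by arith
  qed
  moreover have "hop_weight n y u = sqrt (real (u 0)) * sqrt (real (u y) + 1)
      + sqrt (real (u y)) * sqrt (real (u 0) + 1)
      + (\<Sum>x\<in>D. sqrt (real (u x)) * sqrt (real (u (xor x y)) + 1))"
    unfolding hop_weight_def D_def using y by (subst sum_split_two[of _ 0 y]) auto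
  moreover have "(\<Sum>x\<in>D. sqrt (real (u x)) * sqrt (real (u (xor x y)) + 1)) \<le> sqrt 2 * real k"
    using sum_sqrt_cross_le[of D y u] xor_in_modes_minus[OF y(1)] by (simp add: D_def k_def)
  ultimately show ?thesis
    using hop_weight_estimate[of "u 0" "u y" k l r] by linarith
qed

lemma inverse_sqrt_mult_le:
  assumes "X \<le> sqrt (real l) * B" "0 \<le> B"
  shows "1 / sqrt (real l) * X \<le> B"
  using assms by (cases "l = 0") (simp_all add: field_simps)

lemma Gt_kernel_col_sum_condensate_le:
  assumes "y \<in> modes n" "y \<noteq> 0" "u \<in> condensates n l r"
  shows "(\<Sum>v\<in>V. Gt_kernel n l y v u) \<le> Gbound r"
  using Gt_kernel_col_sum_le[OF assms(2)]
    inverse_sqrt_mult_le[OF hop_weight_condensate_le[OF assms] Gbound_nonneg]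
  by (rule order_trans)

lemma Gt_kernel_row_sum_le:
  assumes v: "v \<in> configs n l" and y: "y \<in> modes n" "y \<noteq> 0"
  shows "(\<Sum>u\<in>condensates n l r. Gt_kernel n l y v u) \<le> Gbound r"
proof -
  define g where "g x = (if hop y x v \<in> condensates n l r then hop_coef y x v else 0)" for x
  have "sum g (modes n) \<le> sqrt (real l) * Gbound r"
  proof (cases "v \<in> condensates n l r")
    case True
    have "sum g (modes n) \<le> (\<Sum>x\<in>modes n. hop_coef y x v)"
      by (rule sum_mono) (simp add: g_def hop_coef_nonneg)
    also have "\<dots> \<le> sqrt (real l) * Gbound r"
      using hop_weight_condensate_le[OF y True] by (simp add: sum_hop_coef[OF y(1)])
    finally show ?thesis .
  next
    case False
    then have below: "v 0 < l - r"
      using v by (simp add: condensates_def)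
    txt \<open>Only the hop into the condensate mode \<open>0\<close> can enter the condensates from outside.\<close>
    have "g x = 0" if "x \<noteq> 0" for x
      using below that y(2) by (auto simp: g_def condensates_def hop_apply_zero)
    then have "sum g (modes n) = g 0"
      by (subst sum.remove[OF finite_modes zero_in_modes]) simp
    also have "\<dots> \<le> sqrt (real l) * Gbound r"
    proof (cases "l - r \<le> v 0 + 1")
      case True
      have "v 0 + v y \<le> l"
        using configs_sum_split[OF v y] by simp
      then have "real (v y) \<le> real r + 1" "real (v 0) + 1 \<le> real l"
        using True below by linarith+
      then have "sqrt (real (v y)) * sqrt (real (v 0) + 1) \<le> sqrt (real r + 1) * sqrt (real l)"
        by (intro mult_mono) auto
      also have "\<dots> \<le> Gbound r * sqrt (real l)"
        by (rule mult_right_mono[OF sqrt_succ_le_Gbound]) simp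
      finally show ?thesis
        by (simp add: g_def hop_coef_def Gbound_nonneg mult.commute)
    next
      case False
      then show ?thesis
        using y(2) by (simp add: g_def condensates_def hop_apply_zero Gbound_nonneg)
    qed
    finally show ?thesis .
  qed
  then show ?thesis
    unfolding Gt_kernel_row_sum[OF finite_condensates] g_def
    by (rule inverse_sqrt_mult_le[OF _ Gbound_nonneg])
qed

lemma snorm_Gt_le:
  assumes y: "y \<in> modes n" "y \<noteq> 0"
    and vanish: "\<And>u. u \<notin> condensates n l r \<Longrightarrow> \<phi> u = 0"
  shows "snorm n l (Gt n l y \<phi>) \<le> Gbound r * snorm n l \<phi>"
proof -
  let ?S = "condensates n l r"
  have "(\<Sum>v\<in>configs n l. (cmod (Gt n l y \<phi> v))\<^sup>2)
      = (\<Sum>v\<in>configs n l. (cmod (\<Sum>u\<in>?S. of_real (Gt_kernel n l y v u) * \<phi> u))\<^sup>2)"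
    using Gt_eq_kernel_sum[OF y(2) finite_condensates vanish] by simp
  also have "\<dots> \<le> Gbound r * Gbound r * (\<Sum>u\<in>?S. (cmod (\<phi> u))\<^sup>2)"
    by (rule schur_test[OF finite_configs finite_condensates Gt_kernel_nonneg Gbound_nonneg
          Gt_kernel_row_sum_le[OF _ y] Gt_kernel_col_sum_condensate_le[OF y]])
  also have "\<dots> \<le> (Gbound r)\<^sup>2 * (\<Sum>u\<in>configs n l. (cmod (\<phi> u))\<^sup>2)"
    unfolding power2_eq_square
    by (intro mult_left_mono sum_mono2 finite_configs) (auto simp: condensates_def)
  finally have "snorm n l (Gt n l y \<phi>) \<le> sqrt ((Gbound r)\<^sup>2 * (\<Sum>u\<in>configs n l. (cmod (\<phi> u))\<^sup>2))"
    unfolding snorm_def by (rule real_sqrt_le_mono)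
  also have "\<dots> = Gbound r * snorm n l \<phi>"
    by (simp add: snorm_def real_sqrt_mult Gbound_nonneg)
  finally show ?thesis .
qed

lemma sum_hop:
  assumes "x \<in> modes n" "y \<in> modes n" "y \<noteq> 0" "0 < v (xor x y)"
  shows "(\<Sum>w\<in>modes n. hop y x v w) = (\<Sum>w\<in>modes n. v w)"
proof -
  define z where "z = xor x y"
  have "z \<in> modes n"
    using assms xor_in_modes by (simp add: z_def)
  moreover have "x \<noteq> z"
    using assms(3) by (metis xor_eq_self_iff z_def)
  moreover have "(\<Sum>w\<in>modes n - {x, z}. hop y x v w) = (\<Sum>w\<in>modes n - {x, z}. v w)"
    by (rule sum.cong) (auto simp: hop_def z_def)
  moreover have "hop y x v x + hop y x v z = v x + v z"
    using assms(3,4) \<open>x \<noteq> z\<close> by (simp add: hop_def z_def)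
  ultimately show ?thesis
    using assms(1) sum_split_two[of "modes n" x z "hop y x v"] sum_split_two[of "modes n" x z v]
    by simp
qed

lemma condensates_of_hop:
  assumes x: "x \<in> modes n" and y: "y \<in> modes n" "y \<noteq> 0" and pos: "0 < v (xor x y)"
    and hop: "hop y x v \<in> condensates n l r"
  shows "v \<in> condensates n l (Suc r)"
proof -
  have outside: "v w = 0" if "w \<notin> modes n" for w
  proof -
    have "w \<noteq> x" "w \<noteq> xor x y"
      using that x xor_in_modes[OF x y(1)] by auto
    then have "v w = hop y x v w"
      by (simp add: hop_def)
    with hop that show ?thesis
      by (simp add: condensates_def configs_def)
  qed
  have "v \<in> configs n l"
    using hop outside sum_hop[of x n y v] x y pos by (simp add: condensates_def configs_def)
  moreover have "hop y x v 0 \<le> v 0 + 1"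
    using y(2) by (auto simp: hop_apply_zero)
  ultimately show ?thesis
    using hop by (simp add: condensates_def) arith
qed

lemma Gt_vanishes_outside_condensates:
  assumes y: "y \<in> modes n" "y \<noteq> 0"
    and vanish: "\<And>u. u \<notin> condensates n l r \<Longrightarrow> \<phi> u = 0"
    and v: "v \<notin> condensates n l (Suc r)"
  shows "Gt n l y \<phi> v = 0"
proof -
  have "of_real (hop_coef y x v) * \<phi> (hop y x v) = 0" if x: "x \<in> modes n" for x
  proof (cases "0 < v (xor x y) \<and> hop y x v \<in> condensates n l r")
    case True
    then show ?thesis
      using condensates_of_hop[OF x y] v by blast
  next
    case False
    then show ?thesis
      using vanish by (auto simp: hop_coef_def)
  qed
  then have "(\<Sum>x\<in>modes n. of_real (hop_coef y x v) * \<phi> (hop y x v)) = 0"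
    by (rule sum.neutral[rule_format])
  then show ?thesis
    using y(2) by (simp add: Gt_eq_hop_sum)
qed

lemma snorm_Ht_le:
  assumes y: "y \<in> modes n" "y \<noteq> 0"
    and vanish: "\<And>u. u \<notin> condensates n l r \<Longrightarrow> \<phi> u = 0"
  shows "snorm n l (Ht n l y \<phi>) \<le> (9 * real r + 9) * snorm n l \<phi>"
proof (cases "l = 0")
  case True
  then have "Ht n l y \<phi> = (\<lambda>_. 0)"
    by (simp add: Ht_def fun_eq_iff)
  then show ?thesis
    using snorm_nonneg[of n l \<phi>] by (simp add: snorm_def)
next
  case False
  have "in_sector n l \<phi>"
    using vanish by (auto simp: in_sector_def condensates_def)
  then have "Ht n l y \<phi> = (\<lambda>v. Gt n l y (Gt n l y \<phi>) v - \<phi> v)"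
    using Ht_eq_Gt_Gt[OF y(1)] False by auto
  then have "snorm n l (Ht n l y \<phi>) \<le> snorm n l (Gt n l y (Gt n l y \<phi>)) + snorm n l \<phi>"
    by (simp only: snorm_diff_le)
  moreover have "snorm n l (Gt n l y (Gt n l y \<phi>)) \<le> Gbound (Suc r) * (Gbound r * snorm n l \<phi>)"
    using snorm_Gt_le[OF y Gt_vanishes_outside_condensates[OF y vanish]]
      mult_left_mono[OF snorm_Gt_le[OF y vanish] Gbound_nonneg]
    by (rule order_trans)
  ultimately have "snorm n l (Ht n l y \<phi>) \<le> (Gbound (Suc r) * Gbound r + 1) * snorm n l \<phi>"
    by (simp add: algebra_simps)
  also have "\<dots> \<le> (9 * real r + 9) * snorm n l \<phi>"
    by (rule mult_right_mono[OF Gbound_succ_mult_le snorm_nonneg])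
  finally show ?thesis .
qed

lemma Con_vanishes: "u \<notin> condensates n l r \<Longrightarrow> Con n l r \<psi> u = 0"
  by (auto simp: Con_def condensates_def)

lemma snorm_Con_le: "snorm n l (Con n l r \<psi>) \<le> snorm n l \<psi>"
  by (rule snorm_mono) (simp add: Con_def)

lemma opnorm_comp_Con_le:
  assumes "0 \<le> C"
    and "\<And>\<phi>. (\<And>u. u \<notin> condensates n l r \<Longrightarrow> \<phi> u = 0) \<Longrightarrow> snorm n l (A \<phi>) \<le> C * snorm n l \<phi>"
  shows "opnorm n l (A \<circ> Con n l r) \<le> C"
proof (rule opnorm_le)
  fix \<psi> assume "snorm n l \<psi> \<le> 1"
  with snorm_Con_le have "snorm n l (Con n l r \<psi>) \<le> 1"
    by (rule order_trans)
  then have "C * snorm n l (Con n l r \<psi>) \<le> C"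
    using assms(1) by (rule mult_left_le)
  with assms(2)[OF Con_vanishes] show "snorm n l ((A \<circ> Con n l r) \<psi>) \<le> C"
    unfolding comp_apply by (rule order_trans)
qed

theorem mainTheorem11:
  fixes n l r y :: nat
  assumes "y \<in> modes n" and "y \<noteq> 0"
  shows "opnorm n l (Gt n l y \<circ> Con n l r) \<le> sqrt (real r) + sqrt (2 + 4 * real r)
     \<and> opnorm n l (Ht n l y \<circ> Con n l r) \<le> 9 * real r + 9"
  using opnorm_comp_Con_le[OF Gbound_nonneg snorm_Gt_le[OF assms]]
    opnorm_comp_Con_le[OF _ snorm_Ht_le[OF assms]]
  by (simp add: Gbound_def)

end
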